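(* Let $n\ge 1$ be an integer, let $g_i:[0,n]\to\mathbb{R}_{\ge 0}$ be a non-decreasing function and let $c_i\in\mathbb{R}$. For $z\in\{0,1,\ldots,n-1\}$ say that investing is a best response to $z$ if $g_i(1+z)-c_i\ge g_i(z)$. Then there exists a unique set $D_i\subseteq\{0,1,\ldots,n-1\}$ such that, for every $z\in\{0,\ldots,n-1\}$, investing is a best response to $z$ if and only if $z\in D_i$. Furthermore: (1) if $g_i$ is concave, $D_i$ is a downward-closed interval; (2) if $g_i$ is convex, $D_i$ is an upward-closed interval; (3) if $g_i$ is sigmoid, $D_i$ is an interval. Conversely, for every set $D_i\subseteq\{0,1,\ldots,n-1\}$ there exist a non-decreasing function $g_i:[0,n]\to\mathbb{R}_{\ge 0}$ and a cost $c_i$ such that, for every $z\in\{0,\ldots,n-1\}$, investing is a best response to $z$ if and only if $z\in D_i$. Furthermore: (1) if $D_i$ is a downward-closed interval, such a $g_i$ can be chosen concave; (2) if $D_i$ is an upward-closed interval, such a $g_i$ can be chosen convex; (3) if $D_i$ is an interval, such a $g_i$ can be chosen sigmoid.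
   Context: This models a player $i$ in a binary networked public goods game: if $i$ chooses $x_i\in\{0,1\}$ and $z$ of her network neighbors invest, her utility is $U_i(x_i,z)=g_i(x_i+z)-c_ix_i$; ties are broken in favor of investing, so investing is a best response to $z$ iff $U_i(1,z)\ge U_i(0,z)$. An interval means a set of consecutive integers in $\{0,\ldots,n-1\}$ (possibly empty); downward-closed means $z\in D_i$ and $0\le z'<z$ imply $z'\in D_i$; upward-closed means $z\in D_i$ and $z<z'\le n-1$ imply $z'\in D_i$. A function $g_i$ is called (generalized) sigmoid if there is some $\hat z\in[-\infty,\infty]$ such that $g_i$ is convex on $\{z:z\le\hat z\}$ and concave on $\{z:z\ge\hat z\}$ (so concave and convex functions are special cases). *)

theory Defs
  imports "HOL-Analysis.Analysis"
begin

definition best_resp :: "(real \<Rightarrow> real) \<Rightarrow> real \<Rightarrow> nat \<Rightarrow> bool" where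
  "best_resp g c z \<longleftrightarrow> g (1 + real z) - c \<ge> g (real z)"

definition admissible :: "nat \<Rightarrow> (real \<Rightarrow> real) \<Rightarrow> bool" where
  "admissible n g \<longleftrightarrow> mono_on {0..real n} g \<and> (\<forall>x\<in>{0..real n}. g x \<ge> 0)"

definition represents :: "nat \<Rightarrow> (real \<Rightarrow> real) \<Rightarrow> real \<Rightarrow> nat set \<Rightarrow> bool" where
  "represents n g c D \<longleftrightarrow> D \<subseteq> {0..<n} \<and> (\<forall>z<n. best_resp g c z \<longleftrightarrow> z \<in> D)"

definition is_interval_nat :: "nat set \<Rightarrow> bool" where
  "is_interval_nat D \<longleftrightarrow> (\<forall>a\<in>D. \<forall>b\<in>D. \<forall>z. a \<le> z \<and> z \<le> b \<longrightarrow> z \<in> D)"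

definition down_closed :: "nat set \<Rightarrow> bool" where
  "down_closed D \<longleftrightarrow> (\<forall>z\<in>D. \<forall>z'. z' < z \<longrightarrow> z' \<in> D)"

definition up_closed :: "nat \<Rightarrow> nat set \<Rightarrow> bool" where
  "up_closed n D \<longleftrightarrow> (\<forall>z\<in>D. \<forall>z'. z < z' \<and> z' \<le> n - 1 \<longrightarrow> z' \<in> D)"

definition sigmoid_on :: "nat \<Rightarrow> (real \<Rightarrow> real) \<Rightarrow> bool" where
  "sigmoid_on n g \<longleftrightarrow> (\<exists>zh::ereal.
      convex_on {x\<in>{0..real n}. ereal x \<le> zh} g \<and>
      concave_on {x\<in>{0..real n}. ereal x \<ge> zh} g)"

end

theory Submission
  imports Defs
begin

text \<open>Investing is a best response to \<open>z\<close> iff \<open>c\<close> is at most the increment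
  \<open>g (1 + z) - g z\<close>, so the best-response set is a superlevel set of the sequence of increments.
  Concavity makes the increments non-increasing and convexity non-decreasing; a sigmoid has
  increments that rise and then fall, i.e. a quasiconcave sequence. Superlevel sets are accordingly
  downward closed, upward closed, or intervals.
  Conversely, the counting function \<open>x \<mapsto> #{z \<in> D. z + 1 \<le> x}\<close> with cost 1 has increment 1
  exactly on \<open>D\<close>, and an interval \<open>{a..<b}\<close> is realised by the ramp rising with slope 1 from
  \<open>a\<close> to \<open>b\<close>, which is sigmoid, concave if \<open>a = 0\<close> and convex if \<open>b = n\<close>.\<close>

lemma convex_on_cong: "(\<And>x. x \<in> S \<Longrightarrow> f x = g x) \<Longrightarrow> convex_on S f \<longleftrightarrow> convex_on S g"
  unfolding convex_on_def convex_def by auto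

lemma concave_on_cong: "(\<And>x. x \<in> S \<Longrightarrow> f x = g x) \<Longrightarrow> concave_on S f \<longleftrightarrow> concave_on S g"
  unfolding concave_on_def by (rule convex_on_cong) simp

lemma concave_on_subset: "\<lbrakk>concave_on T f; S \<subseteq> T; convex S\<rbrakk> \<Longrightarrow> concave_on S f"
  unfolding concave_on_def by (rule convex_on_subset)

lemma convex_on_max:
  assumes "convex_on S f" "convex_on S g"
  shows "convex_on S (\<lambda>x. max (f x) (g x))"
  unfolding convex_on_def
proof (intro conjI ballI allI impI)
  show "convex S" using assms(1) by (rule convex_on_imp_convex)
  fix x y and u v :: real
  assume xy: "x \<in> S" "y \<in> S" and uv: "0 \<le> u" "0 \<le> v" "u + v = 1"
  have "f (u *\<^sub>R x + v *\<^sub>R y) \<le> u * f x + v * f y" "g (u *\<^sub>R x + v *\<^sub>R y) \<le> u * g x + v * g y"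
    using assms xy uv unfolding convex_on_def by blast+
  moreover have "u * f x + v * f y \<le> u * max (f x) (g x) + v * max (f y) (g y)"
    "u * g x + v * g y \<le> u * max (f x) (g x) + v * max (f y) (g y)"
    using uv by (intro add_mono mult_left_mono; simp)+
  ultimately show "max (f (u *\<^sub>R x + v *\<^sub>R y)) (g (u *\<^sub>R x + v *\<^sub>R y))
      \<le> u * max (f x) (g x) + v * max (f y) (g y)"
    by linarith
qed

lemma concave_on_min:
  assumes "concave_on S f" "concave_on S g"
  shows "concave_on S (\<lambda>x. min (f x) (g x))"
proof -
  have "convex_on S (\<lambda>x. max (- f x) (- g x))"
    using assms unfolding concave_on_def by (rule convex_on_max)
  then show ?thesis unfolding concave_on_def by (simp add: minus_min_eq_max)
qed

lemma convex_on_slope_mono: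
  fixes f :: "real \<Rightarrow> real"
  assumes f: "convex_on S f" and S: "x1 \<in> S" "y1 \<in> S" "x2 \<in> S" "y2 \<in> S"
    and lt: "x1 < y1" "x2 < y2" "x1 \<le> x2" "y1 \<le> y2"
  shows "(f y1 - f x1) / (y1 - x1) \<le> (f y2 - f x2) / (y2 - x2)"
proof -
  have slope_sym: "(f q - f p) / (q - p) = (f p - f q) / (p - q)" for p q
    by (metis minus_diff_eq minus_divide_divide)
  have "(f y1 - f x1) / (y1 - x1) \<le> (f y2 - f x1) / (y2 - x1)"
  proof (cases "y1 = y2")
    case False
    with lt have "y1 < y2" by simp
    from convex_on_slope_le(1)[OF f S(1) S(4) lt(1) this] show ?thesis by (simp add: slope_sym)
  qed simp
  also have "\<dots> \<le> (f y2 - f x2) / (y2 - x2)"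
  proof (cases "x1 = x2")
    case False
    with lt have "x1 < x2" by simp
    from convex_on_slope_le(2)[OF f S(1) S(4) this lt(2)] show ?thesis by (simp add: slope_sym)
  qed simp
  finally show ?thesis .
qed

lemma concave_on_slope_antimono:
  fixes f :: "real \<Rightarrow> real"
  assumes f: "concave_on S f" and S: "x1 \<in> S" "y1 \<in> S" "x2 \<in> S" "y2 \<in> S"
    and lt: "x1 < y1" "x2 < y2" "x1 \<le> x2" "y1 \<le> y2"
  shows "(f y2 - f x2) / (y2 - x2) \<le> (f y1 - f x1) / (y1 - x1)"
proof -
  have "- ((f y1 - f x1) / (y1 - x1)) \<le> - ((f y2 - f x2) / (y2 - x2))"
    using convex_on_slope_mono[OF f[unfolded concave_on_def] S lt] by (simp add: minus_divide_left)
  then show ?thesis by simp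
qed

definition best_resp_set :: "nat \<Rightarrow> (real \<Rightarrow> real) \<Rightarrow> real \<Rightarrow> nat set" where
  "best_resp_set n g c = {z. z < n \<and> best_resp g c z}"

lemma represents_iff_eq_best_resp_set: "represents n g c D \<longleftrightarrow> D = best_resp_set n g c"
  unfolding represents_def best_resp_set_def by auto

lemma concave_on_imp_down_closed_best_resp_set:
  assumes g: "concave_on {0..real n} g"
  shows "down_closed (best_resp_set n g c)"
  unfolding down_closed_def best_resp_set_def best_resp_def
proof (intro ballI allI impI)
  fix z z' assume z: "z \<in> {z. z < n \<and> g (real z) \<le> g (1 + real z) - c}" and "z' < z"
  have "(g (real z + 1) - g (real z)) / (real z + 1 - real z)
      \<le> (g (real z' + 1) - g (real z')) / (real z' + 1 - real z')"
    by (rule concave_on_slope_antimono[OF g]) (use z \<open>z' < z\<close> in auto)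
  with z \<open>z' < z\<close> show "z' \<in> {z. z < n \<and> g (real z) \<le> g (1 + real z) - c}"
    by (simp add: add.commute)
qed

lemma convex_on_imp_up_closed_best_resp_set:
  assumes g: "convex_on {0..real n} g"
  shows "up_closed n (best_resp_set n g c)"
  unfolding up_closed_def best_resp_set_def best_resp_def
proof (intro ballI allI impI)
  fix z z' assume z: "z \<in> {z. z < n \<and> g (real z) \<le> g (1 + real z) - c}" and z': "z < z' \<and> z' \<le> n - 1"
  have "(g (real z + 1) - g (real z)) / (real z + 1 - real z)
      \<le> (g (real z' + 1) - g (real z')) / (real z' + 1 - real z')"
    by (rule convex_on_slope_mono[OF g]) (use z z' in auto)
  moreover have "z' < n" using z z' by linarith
  ultimately show "z' \<in> {z. z < n \<and> g (real z) \<le> g (1 + real z) - c}"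
    using z by (simp add: add.commute)
qed

lemma sigmoid_on_increment_quasiconcave:
  assumes "sigmoid_on n g" and ab: "a < b" and bd: "b < d" and dn: "d < n"
  shows "min (g (1 + real a) - g (real a)) (g (1 + real d) - g (real d)) \<le> g (1 + real b) - g (real b)"
    (is "?m \<le> _")
proof -
  obtain zh where cv: "convex_on {x\<in>{0..real n}. ereal x \<le> zh} g"
    and cc: "concave_on {x\<in>{0..real n}. zh \<le> ereal x} g"
    using \<open>sigmoid_on n g\<close> unfolding sigmoid_on_def by blast
  have bounds: "real a + 1 \<le> real b" "real b + 1 \<le> real d" "real d + 1 \<le> real n"
    using ab bd dn by linarith+
  consider "ereal (real b + 1) \<le> zh" | "zh \<le> ereal (real b)"
    | "ereal (real b) < zh" "zh < ereal (real b + 1)"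
    by (meson linorder_not_le)
  then show ?thesis
  proof cases
    case 1
    then have "ereal x \<le> zh" if "x \<le> real b + 1" for x
      using that by (meson ereal_less_eq(3) order_trans)
    then have "(g (real a + 1) - g (real a)) / (real a + 1 - real a)
        \<le> (g (real b + 1) - g (real b)) / (real b + 1 - real b)"
      by (intro convex_on_slope_mono[OF cv]) (use bounds in auto)
    then show ?thesis by (simp add: add.commute)
  next
    case 2
    then have "zh \<le> ereal x" if "real b \<le> x" for x
      using that by (meson ereal_less_eq(3) order_trans)
    then have "(g (real d + 1) - g (real d)) / (real d + 1 - real d)
        \<le> (g (real b + 1) - g (real b)) / (real b + 1 - real b)"
      by (intro concave_on_slope_antimono[OF cc]) (use bounds in auto)
    then show ?thesis by (simp add: add.commute)
  next
    case 3
    then obtain r where "zh = ereal r" "real b < r" "r < real b + 1"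
      by (cases zh) auto
    \<comment> \<open>The inflection point lies strictly inside \<open>[b, b + 1]\<close>: split that step at it.\<close>
    have "(g (real a + 1) - g (real a)) / (real a + 1 - real a) \<le> (g r - g (real b)) / (r - real b)"
      by (intro convex_on_slope_mono[OF cv]) (use \<open>zh = ereal r\<close> \<open>real b < r\<close> \<open>r < real b + 1\<close> bounds in auto)
    then have "?m \<le> (g r - g (real b)) / (r - real b)"
      by (simp add: add.commute min_le_iff_disj)
    then have left: "?m * (r - real b) \<le> g r - g (real b)"
      using \<open>real b < r\<close> by (simp add: pos_le_divide_eq)
    have "(g (real d + 1) - g (real d)) / (real d + 1 - real d)
        \<le> (g (real b + 1) - g r) / (real b + 1 - r)"
      by (intro concave_on_slope_antimono[OF cc]) (use \<open>zh = ereal r\<close> \<open>real b < r\<close> \<open>r < real b + 1\<close> bounds in auto)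
    then have "?m \<le> (g (real b + 1) - g r) / (real b + 1 - r)"
      by (simp add: add.commute min_le_iff_disj)
    then have right: "?m * (real b + 1 - r) \<le> g (real b + 1) - g r"
      using \<open>r < real b + 1\<close> by (simp add: pos_le_divide_eq)
    have "?m = ?m * (r - real b) + ?m * (real b + 1 - r)"
      by (simp add: algebra_simps)
    with left right show ?thesis by (simp add: add.commute)
  qed
qed

lemma sigmoid_on_imp_is_interval_best_resp_set:
  assumes "sigmoid_on n g"
  shows "is_interval_nat (best_resp_set n g c)"
  unfolding is_interval_nat_def best_resp_set_def best_resp_def
proof (intro ballI allI impI)
  fix a b z
  assume a: "a \<in> {z. z < n \<and> g (real z) \<le> g (1 + real z) - c}"
    and b: "b \<in> {z. z < n \<and> g (real z) \<le> g (1 + real z) - c}" and "a \<le> z \<and> z \<le> b"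
  then consider "z = a" | "z = b" | "a < z" "z < b" by linarith
  then show "z \<in> {z. z < n \<and> g (real z) \<le> g (1 + real z) - c}"
  proof cases
    case 3
    with sigmoid_on_increment_quasiconcave[OF assms 3] a b show ?thesis by auto
  qed (use a b in auto)
qed

lemma down_closed_imp_is_interval_nat: "down_closed D \<Longrightarrow> is_interval_nat D"
  unfolding down_closed_def is_interval_nat_def
proof (intro ballI allI impI)
  fix a b z assume "\<forall>z\<in>D. \<forall>z'<z. z' \<in> D" "a \<in> D" "b \<in> D" "a \<le> z \<and> z \<le> b"
  then show "z \<in> D" by (cases "z = b") auto
qed

lemma up_closed_imp_is_interval_nat:
  "\<lbrakk>D \<subseteq> {0..<n}; up_closed n D\<rbrakk> \<Longrightarrow> is_interval_nat D"
  unfolding up_closed_def is_interval_nat_def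
proof (intro ballI allI impI)
  fix a b z assume "D \<subseteq> {0..<n}" "\<forall>z\<in>D. \<forall>z'. z < z' \<and> z' \<le> n - 1 \<longrightarrow> z' \<in> D"
    "a \<in> D" "b \<in> D" "a \<le> z \<and> z \<le> b"
  moreover have "b < n" using \<open>D \<subseteq> {0..<n}\<close> \<open>b \<in> D\<close> by auto
  ultimately show "z \<in> D" by (cases "z = a") auto
qed

definition step_benefit :: "nat set \<Rightarrow> real \<Rightarrow> real" where
  "step_benefit D x = real (card {z\<in>D. real z + 1 \<le> x})"

lemma admissible_step_benefit: "finite D \<Longrightarrow> admissible n (step_benefit D)"
  unfolding admissible_def step_benefit_def
  by (auto intro!: mono_onI card_mono finite_subset[of _ D])

lemma step_benefit_increment:
  assumes "finite D"
  shows "step_benefit D (1 + real z) - step_benefit D (real z) = (if z \<in> D then 1 else 0)"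
proof -
  have "{z'\<in>D. real z' + 1 \<le> 1 + real z} = {z'\<in>D. z' < z} \<union> (D \<inter> {z})"
    "{z'\<in>D. real z' + 1 \<le> real z} = {z'\<in>D. z' < z}"
    by auto
  then show ?thesis
    using assms unfolding step_benefit_def by (simp add: card_Un_disjoint Int_insert_right)
qed

lemma represents_step_benefit: "D \<subseteq> {0..<n} \<Longrightarrow> represents n (step_benefit D) 1 D"
  unfolding represents_def best_resp_def
  using step_benefit_increment[OF finite_subset[OF _ finite_atLeastLessThan]]
  by (auto simp: algebra_simps)

definition ramp :: "real \<Rightarrow> real \<Rightarrow> real \<Rightarrow> real" where
  "ramp a b x = min (max 0 (x - a)) (b - a)"

lemma admissible_ramp: "a \<le> b \<Longrightarrow> admissible n (ramp a b)"
  unfolding admissible_def ramp_def by (auto intro!: mono_onI)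

lemma represents_ramp:
  assumes "a \<le> b" "b \<le> n"
  shows "represents n (ramp (real a) (real b)) 1 {a..<b}"
  unfolding represents_def best_resp_def
proof (intro conjI allI impI)
  fix z assume "z < n"
  consider "z < a" | "a \<le> z" "z < b" | "b \<le> z" by linarith
  then show "ramp (real a) (real b) (1 + real z) - 1 \<ge> ramp (real a) (real b) (real z)
      \<longleftrightarrow> z \<in> {a..<b}"
    by cases (use assms in \<open>auto simp: ramp_def\<close>)
qed (use assms in auto)

lemma convex_on_ramp_atMost_start: "convex_on {..a} (ramp a b)"
proof -
  have "convex_on {..a} (ramp a b) \<longleftrightarrow> convex_on {..a} (\<lambda>x. min 0 (b - a))"
    by (rule convex_on_cong) (simp add: ramp_def)
  then show ?thesis by (simp add: convex_on_const)
qed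

lemma concave_on_ramp_atLeast_start: "concave_on {a..} (ramp a b)"
proof -
  have "concave_on {a..} (ramp a b) \<longleftrightarrow> concave_on {a..} (\<lambda>x. min (x - a) (b - a))"
    by (rule concave_on_cong) (simp add: ramp_def)
  moreover have "concave_on {a..} (\<lambda>x. min (x - a) (b - a))"
    by (intro concave_on_min concave_on_diff) (auto simp: concave_on_ident convex_on_const concave_on_const)
  ultimately show ?thesis by simp
qed

lemma convex_on_ramp_atMost_end:
  assumes "a \<le> b"
  shows "convex_on {..b} (ramp a b)"
proof -
  have "convex_on {..b} (ramp a b) \<longleftrightarrow> convex_on {..b} (\<lambda>x. max 0 (x - a))"
    by (rule convex_on_cong) (use assms in \<open>auto simp: ramp_def\<close>)
  moreover have "convex_on {..b} (\<lambda>x. max 0 (x - a))"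
    by (intro convex_on_max convex_on_diff) (auto simp: convex_on_ident convex_on_const concave_on_const)
  ultimately show ?thesis by simp
qed

lemma sigmoid_on_ramp: "sigmoid_on n (ramp a b)"
proof -
  have pieces: "{x\<in>{0..real n}. ereal x \<le> ereal a} = {0..min (real n) a}"
    "{x\<in>{0..real n}. ereal a \<le> ereal x} = {max 0 a..real n}"
    by auto
  have "convex_on {0..min (real n) a} (ramp a b)"
    by (rule convex_on_subset[OF convex_on_ramp_atMost_start]) auto
  moreover have "concave_on {max 0 a..real n} (ramp a b)"
    by (rule concave_on_subset[OF concave_on_ramp_atLeast_start]) auto
  ultimately show ?thesis
    unfolding sigmoid_on_def pieces[symmetric] by blast
qed

lemma is_interval_nat_eq_atLeastLessThan:
  assumes "D \<subseteq> {0..<n}" "is_interval_nat D"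
  obtains a b where "a \<le> b" "b \<le> n" "D = {a..<b}"
proof (cases "D = {}")
  case True
  then show ?thesis using that[of 0 0] by simp
next
  case False
  have "finite D" using assms(1) finite_subset by blast
  with False have ends: "Min D \<in> D" "Max D \<in> D" by simp_all
  have "D = {Min D..<Suc (Max D)}"
  proof
    show "D \<subseteq> {Min D..<Suc (Max D)}" using \<open>finite D\<close> by (auto simp: less_Suc_eq_le)
    show "{Min D..<Suc (Max D)} \<subseteq> D"
    proof
      fix z assume "z \<in> {Min D..<Suc (Max D)}"
      then have "Min D \<le> z" "z \<le> Max D" by auto
      with assms(2) ends show "z \<in> D" unfolding is_interval_nat_def by blast
    qed
  qed
  moreover have "Min D \<le> Suc (Max D)"
    using ends \<open>finite D\<close> by (simp add: le_SucI)
  moreover have "Suc (Max D) \<le> n"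
    using ends(2) assms(1) by (simp add: Suc_le_eq subset_iff)
  ultimately show ?thesis using that by blast
qed

lemma down_closed_eq_lessThan:
  assumes "D \<subseteq> {0..<n}" "down_closed D"
  obtains b where "b \<le> n" "D = {0..<b}"
proof -
  obtain a b where "b \<le> n" and D: "D = {a..<b}"
    using is_interval_nat_eq_atLeastLessThan[OF assms(1) down_closed_imp_is_interval_nat[OF assms(2)]] .
  show ?thesis
  proof (cases "a < b")
    case True
    have "a = 0"
    proof (rule ccontr)
      assume "a \<noteq> 0"
      moreover have "a \<in> D" using True D by simp
      ultimately have "0 \<in> D" using assms(2) unfolding down_closed_def by blast
      with D \<open>a \<noteq> 0\<close> show False by simp
    qed
    with D \<open>b \<le> n\<close> show ?thesis using that[of b] by simp
  next
    case False
    with D show ?thesis using that[of 0] by simp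
  qed
qed

lemma up_closed_eq_atLeastLessThan:
  assumes "D \<subseteq> {0..<n}" "up_closed n D"
  obtains a where "a \<le> n" "D = {a..<n}"
proof -
  obtain a b where "b \<le> n" and D: "D = {a..<b}"
    using is_interval_nat_eq_atLeastLessThan[OF assms(1) up_closed_imp_is_interval_nat[OF assms]] .
  show ?thesis
  proof (cases "a < b")
    case True
    have "b = n"
    proof (rule ccontr)
      assume "b \<noteq> n"
      then have "b - 1 < b" "b \<le> n - 1" using True \<open>b \<le> n\<close> by linarith+
      moreover have "b - 1 \<in> D" using True D by auto
      ultimately have "b \<in> D" using assms(2) unfolding up_closed_def by blast
      with D show False by simp
    qed
    with D True show ?thesis using that[of a] by simp
  next
    case False
    with D show ?thesis using that[of n] by simp
  qed
qed

lemma exists_concave_representation: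
  assumes "D \<subseteq> {0..<n}" "down_closed D"
  shows "\<exists>g c. admissible n g \<and> represents n g c D \<and> concave_on {0..real n} g"
proof -
  obtain b where "b \<le> n" "D = {0..<b}"
    using down_closed_eq_lessThan[OF assms] .
  then have "admissible n (ramp 0 (real b)) \<and> represents n (ramp 0 (real b)) 1 D
      \<and> concave_on {0..real n} (ramp 0 (real b))"
    using admissible_ramp represents_ramp[of 0 b n]
      concave_on_subset[OF concave_on_ramp_atLeast_start, of "{0..real n}"] by simp
  then show ?thesis by blast
qed

lemma exists_convex_representation:
  assumes "D \<subseteq> {0..<n}" "up_closed n D"
  shows "\<exists>g c. admissible n g \<and> represents n g c D \<and> convex_on {0..real n} g"
proof -
  obtain a where "a \<le> n" "D = {a..<n}"
    using up_closed_eq_atLeastLessThan[OF assms] .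
  then have "admissible n (ramp a n) \<and> represents n (ramp a n) 1 D
      \<and> convex_on {0..real n} (ramp a n)"
    using admissible_ramp represents_ramp[of a n n]
      convex_on_subset[OF convex_on_ramp_atMost_end, of a n "{0..real n}"] by simp
  then show ?thesis by blast
qed

lemma exists_sigmoid_representation:
  assumes "D \<subseteq> {0..<n}" "is_interval_nat D"
  shows "\<exists>g c. admissible n g \<and> represents n g c D \<and> sigmoid_on n g"
proof -
  obtain a b where "a \<le> b" "b \<le> n" "D = {a..<b}"
    using is_interval_nat_eq_atLeastLessThan[OF assms] .
  then have "admissible n (ramp a b) \<and> represents n (ramp a b) 1 D \<and> sigmoid_on n (ramp a b)"
    using admissible_ramp represents_ramp[of a b n] sigmoid_on_ramp by simp
  then show ?thesis by blast
qed

theorem lemma2p3: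
  fixes n :: nat
  assumes "n \<ge> 1"
  shows "(\<forall>g c. admissible n g \<longrightarrow>
            (\<exists>!D. represents n g c D) \<and>
            (\<forall>D. represents n g c D \<longrightarrow>
               (concave_on {0..real n} g \<longrightarrow> down_closed D \<and> is_interval_nat D) \<and>
               (convex_on {0..real n} g \<longrightarrow> up_closed n D \<and> is_interval_nat D) \<and>
               (sigmoid_on n g \<longrightarrow> is_interval_nat D)))
       \<and>
         (\<forall>D. D \<subseteq> {0..<n} \<longrightarrow>
            (\<exists>g c. admissible n g \<and> represents n g c D) \<and>
            (down_closed D \<and> is_interval_nat D \<longrightarrow>
               (\<exists>g c. admissible n g \<and> represents n g c D \<and> concave_on {0..real n} g)) \<and>
            (up_closed n D \<and> is_interval_nat D \<longrightarrow>
               (\<exists>g c. admissible n g \<and> represents n g c D \<and> convex_on {0..real n} g)) \<and>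
            (is_interval_nat D \<longrightarrow>
               (\<exists>g c. admissible n g \<and> represents n g c D \<and> sigmoid_on n g)))"
proof (intro conjI allI impI)
  fix g c
  show "\<exists>!D. represents n g c D"
    by (simp add: represents_iff_eq_best_resp_set)
next
  fix g c D
  assume "represents n g c D"
  then have D: "D = best_resp_set n g c" "D \<subseteq> {0..<n}"
    unfolding represents_def best_resp_set_def by auto
  show "down_closed D" "is_interval_nat D" if "concave_on {0..real n} g"
    using concave_on_imp_down_closed_best_resp_set[OF that] D(1)
    by (simp_all add: down_closed_imp_is_interval_nat)
  show "up_closed n D" "is_interval_nat D" if "convex_on {0..real n} g"
    using convex_on_imp_up_closed_best_resp_set[OF that] D
    by (simp_all add: up_closed_imp_is_interval_nat)
  show "is_interval_nat D" if "sigmoid_on n g"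
    using sigmoid_on_imp_is_interval_best_resp_set[OF that] D(1) by simp
next
  fix D :: "nat set"
  assume D: "D \<subseteq> {0..<n}"
  show "\<exists>g c. admissible n g \<and> represents n g c D"
    using admissible_step_benefit[OF finite_subset[OF D finite_atLeastLessThan]]
      represents_step_benefit[OF D] by blast
  show "\<exists>g c. admissible n g \<and> represents n g c D \<and> concave_on {0..real n} g"
    if "down_closed D \<and> is_interval_nat D"
    using exists_concave_representation[OF D] that by blast
  show "\<exists>g c. admissible n g \<and> represents n g c D \<and> convex_on {0..real n} g"
    if "up_closed n D \<and> is_interval_nat D"
    using exists_convex_representation[OF D] that by blast
  show "\<exists>g c. admissible n g \<and> represents n g c D \<and> sigmoid_on n g"
    if "is_interval_nat D"
    using exists_sigmoid_representation[OF D] that by blast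
qed

end
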